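(* Let a memory system $M$ consist of one elementary system and an information system $I=I_1\cdots I_N$ of $N$ elementary systems, all with ontic coordinates in $\mathbb{Z}_d$ or all in $\mathbb{R}$; order the joint coordinates as $(q_M,p_M,q_{I_1},p_{I_1},\dots)$. Let the state of $I$ be an arbitrary valid epistemic state $(W,\vec w)$, with $W$ spanned by $\vec w_1,\dots,\vec w_k$. Let $S^M$ be a symplectic transformation of $I$ and $\vec f=((S^M)^T)^{-1}\vec q_1$, where $\vec q_1$ is the position observable of $I_1$; let $T$ be a symplectic transformation of $M$ and $\vec v=(T^T)^{-1}\vec q$, where $\vec q$ is the position observable of $M$. Let the memory initially be in the state where the value of $\vec v$ is $0$, so the total initial state is $\big(\langle(\vec v,0,\dots,0)^T,(0,0,\vec w_1)^T,\dots,(0,0,\vec w_k)^T\rangle,(0,0,\vec w)^T\big)$. Let $\Phi$ be the symplectic transformation acting on $M$ and $I_1$ (identity on $I_2,\dots,I_N$) by $(q_{I_1},p_{I_1},q_M,p_M)\mapsto(q_{I_1},\,p_{I_1}-p_M,\,q_M+q_{I_1},\,p_M)$. Then the transformation $$\Gamma=(T\oplus\mathbb{1}_I)(\mathbb{1}_M\oplus S^M)\,\Phi\,(\mathbb{1}_M\oplus (S^M)^{-1})(T^{-1}\oplus\mathbb{1}_I)$$ correlates the value of $\vec v$ on the memory with the value of $\vec f$ on the information system: in the final state, every compatible ontic state $\vec m=(\vec m_M,\vec m_I)$ satisfies $\vec v^T\vec m_M=\vec f^T\vec m_I$. Moreover, if $d$ is prime or the systems are continuous, the marginal of the final state on $I$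 (tracing out the memory) is the mixture of the post-measurement states corresponding to all possible outcomes (those with nonzero probability) of a measurement of $\vec f$ (i.e. of $V_\pi=\langle\vec f\rangle$) on $(W,\vec w)$.
   Context: Toy theory (quadrature formalism): ontic states $\vec m\in\Omega=\mathbb{Z}_d^{2n}$ or $\mathbb{R}^{2n}$, coordinates $(q_1,p_1,\dots,q_n,p_n)$; an observable $\vec f\in\Omega$ takes value $\vec f^T\vec m$; the position observable of the $i$-th elementary system is the vector with a 1 in coordinate $q_i$ and zeros elsewhere. Poisson bracket $[\vec f,\vec g]=\sum_i(f_{2i-1}g_{2i}-f_{2i}g_{2i-1})$; a matrix is symplectic if it preserves this bracket. A valid epistemic state $(V,\vec v)$ has $V$ an isotropic subspace/submodule ($[\vec f,\vec g]=0$ on $V$); compatible ontic states are $V^\perp+\vec v$ ($V^\perp=\{\vec m:\vec f^T\vec m=0\ \forall\vec f\in V\}$), uniformly distributed. A symplectic $\Gamma$ acts by $\vec m\mapsto\Gamma\vec m$ and $(V,\vec v)\mapsto((\Gamma^T)^{-1}V,\Gamma\vec v)$. Tracing out a subsystem = marginalizing the uniform distribution. A measurement is an isotropic $V_\pi$, outcome $\vec v_\pi$ = cell $V_\pi^\perp+\vec v_\pi$; post-measurement state: $(V_\pi+V_{\text{commute}},\vec v')$ with $V_{\text{commute}}=\{\vec f\in V:[\vec f,\vec g]=0\ \forall \vec g\in V_\pi\}$ and $\vec v'\in(V_\pi^\perp+\vec v_\pi)\cap(V_{\text{commute}}^\perp+\vec v)$. A mixture of epistemic states is the uniform distribution on the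 union of their compatible ontic sets. *)

theory Defs
  imports "Jordan_Normal_Form.Matrix" "HOL-Computational_Algebra.Primes"
begin

text \<open>Ring of ontic coordinates: either Z_d (d >= 2) or R, up to ring isomorphism.\<close>

definition is_Zd :: "'a::comm_ring_1 itself \<Rightarrow> nat \<Rightarrow> bool" where
  "is_Zd _ d \<longleftrightarrow> d \<ge> 2 \<and> (\<exists>\<phi>::'a \<Rightarrow> int. bij_betw \<phi> UNIV {0..<int d} \<and>
      \<phi> 1 = 1 \<and>
      (\<forall>x y. \<phi> (x + y) = (\<phi> x + \<phi> y) mod int d \<and> \<phi> (x * y) = (\<phi> x * \<phi> y) mod int d))"

definition is_R :: "'a::comm_ring_1 itself \<Rightarrow> bool" where
  "is_R _ \<longleftrightarrow> (\<exists>\<phi>::'a \<Rightarrow> real. bij \<phi> \<and> \<phi> 1 = 1 \<and>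
      (\<forall>x y. \<phi> (x + y) = \<phi> x + \<phi> y \<and> \<phi> (x * y) = \<phi> x * \<phi> y))"

text \<open>Vectors of n elementary systems live in carrier_vec (2*n), coordinates
  (q_1,p_1,...,q_n,p_n) at indices 0,1,...,2n-1.\<close>

definition poisson :: "nat \<Rightarrow> 'a::comm_ring_1 vec \<Rightarrow> 'a vec \<Rightarrow> 'a" where
  "poisson n f g = (\<Sum>i<n. f $ (2*i) * g $ (2*i+1) - f $ (2*i+1) * g $ (2*i))"

definition symplectic :: "nat \<Rightarrow> 'a::comm_ring_1 mat \<Rightarrow> bool" where
  "symplectic n S \<longleftrightarrow> S \<in> carrier_mat (2*n) (2*n) \<and>
     (\<forall>f \<in> carrier_vec (2*n). \<forall>g \<in> carrier_vec (2*n).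
        poisson n (S *\<^sub>v f) (S *\<^sub>v g) = poisson n f g)"

definition minv :: "nat \<Rightarrow> 'a::comm_ring_1 mat \<Rightarrow> 'a mat" where
  "minv m A = (THE B. B \<in> carrier_mat m m \<and> A * B = 1\<^sub>m m \<and> B * A = 1\<^sub>m m)"

definition dsum :: "'a::comm_ring_1 mat \<Rightarrow> 'a mat \<Rightarrow> 'a mat" (infixl \<open>\<oplus>\<^sub>m\<close> 70) where
  "A \<oplus>\<^sub>m B = four_block_mat A (0\<^sub>m (dim_row A) (dim_col B)) (0\<^sub>m (dim_row B) (dim_col A)) B"

definition lin_span :: "nat \<Rightarrow> 'a::comm_ring_1 vec list \<Rightarrow> 'a vec set" where
  "lin_span m gs = {foldr (+) (map (\<lambda>(c, g). c \<cdot>\<^sub>v g) (zip cs gs)) (0\<^sub>v m) | cs. length cs = length gs}"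

definition isotropic :: "nat \<Rightarrow> 'a::comm_ring_1 vec set \<Rightarrow> bool" where
  "isotropic n V \<longleftrightarrow> (\<forall>f\<in>V. \<forall>g\<in>V. poisson n f g = 0)"

definition submodule :: "nat \<Rightarrow> 'a::comm_ring_1 vec set \<Rightarrow> bool" where
  "submodule m V \<longleftrightarrow> V \<subseteq> carrier_vec m \<and> 0\<^sub>v m \<in> V \<and>
     (\<forall>f\<in>V. \<forall>g\<in>V. f + g \<in> V) \<and> (\<forall>c. \<forall>f\<in>V. c \<cdot>\<^sub>v f \<in> V)"

definition valid_state :: "nat \<Rightarrow> 'a::comm_ring_1 vec set \<Rightarrow> 'a vec \<Rightarrow> bool" where
  "valid_state n V v \<longleftrightarrow> submodule (2*n) V \<and> isotropic n V \<and> v \<in> carrier_vec (2*n)"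

definition perp :: "nat \<Rightarrow> 'a::comm_ring_1 vec set \<Rightarrow> 'a vec set" where
  "perp n V = {m \<in> carrier_vec (2*n). \<forall>f\<in>V. f \<bullet> m = 0}"

definition compat :: "nat \<Rightarrow> 'a::comm_ring_1 vec set \<Rightarrow> 'a vec \<Rightarrow> 'a vec set" where
  "compat n V v = {u + v | u. u \<in> perp n V}"

definition act_space :: "nat \<Rightarrow> 'a::comm_ring_1 mat \<Rightarrow> 'a vec set \<Rightarrow> 'a vec set" where
  "act_space n \<Gamma> V = (\<lambda>f. minv (2*n) (transpose_mat \<Gamma>) *\<^sub>v f) ` V"

definition act_vec :: "'a::comm_ring_1 mat \<Rightarrow> 'a vec \<Rightarrow> 'a vec" where
  "act_vec \<Gamma> v = \<Gamma> *\<^sub>v v"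

definition commuting_part :: "nat \<Rightarrow> 'a::comm_ring_1 vec set \<Rightarrow> 'a vec set \<Rightarrow> 'a vec set" where
  "commuting_part n V Vpi = {f \<in> V. \<forall>g\<in>Vpi. poisson n f g = 0}"

definition post_measurement :: "nat \<Rightarrow> 'a::comm_ring_1 vec set \<Rightarrow> 'a vec \<Rightarrow> 'a vec set \<Rightarrow> 'a vec
     \<Rightarrow> 'a vec set \<Rightarrow> 'a vec \<Rightarrow> bool" where
  "post_measurement n V v Vpi vpi V' v' \<longleftrightarrow>
     V' = {a + b | a b. a \<in> Vpi \<and> b \<in> commuting_part n V Vpi} \<and>
     v' \<in> compat n Vpi vpi \<inter> compat n (commuting_part n V Vpi) v"

definition possible_outcome :: "nat \<Rightarrow> 'a::comm_ring_1 vec set \<Rightarrow> 'a vec \<Rightarrow> 'a vec set \<Rightarrow> 'a vec \<Rightarrow> bool" where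
  "possible_outcome n V v Vpi vpi \<longleftrightarrow> vpi \<in> carrier_vec (2*n) \<and> compat n Vpi vpi \<inter> compat n V v \<noteq> {}"

text \<open>The CNOT-like map Phi on M (indices 0,1) and I_1 (indices 2,3):
  q_M' = q_M + q_I1, p_I1' = p_I1 - p_M, all else unchanged.\<close>
definition Phi :: "nat \<Rightarrow> 'a::comm_ring_1 mat" where
  "Phi N = mat (2 + 2*N) (2 + 2*N) (\<lambda>(i, j).
      if i = j then 1 else if (i, j) = (0, 2) then 1 else if (i, j) = (3, 1) then -1 else 0)"

end

theory Submission
  imports Defs "Jordan_Normal_Form.Determinant"
begin

text \<open>Write \<open>P = T \<oplus> S\<close>. Then \<open>\<Gamma> = P \<Phi> P\<^sup>-\<^sup>1\<close>, and in the coordinates \<open>a = T\<^sup>-\<^sup>1x\<close>,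
  \<open>b = S\<^sup>-\<^sup>1y\<close> of an ontic state \<open>(x, y)\<close> the map \<open>\<Phi>\<close> sends \<open>(a, b)\<close> to
  \<open>(a + b\<^sub>0 e\<^sub>0, b - a\<^sub>1 e\<^sub>1)\<close>. The observables \<open>v = T\<^sup>-\<^sup>T q\<close> and \<open>f = S\<^sup>-\<^sup>T q\<^sub>1\<close> read off
  \<open>a\<^sub>0\<close> and \<open>b\<^sub>0\<close>. Initially \<open>a\<^sub>0 = 0\<close>, so afterwards the memory holds \<open>b\<^sub>0\<close>, the
  (unchanged) value of \<open>f\<close>. On the information system, \<open>\<Gamma>\<close> shifts \<open>y\<close> by
  \<open>a\<^sub>1 J f\<close> with \<open>J f = -S e\<^sub>1\<close>, where \<open>a\<^sub>1\<close> ranges over all scalars: the marginal is the union of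
  the translates \<open>compat(W, w) + t J f\<close>. A measurement of \<open>f\<close> forgets exactly the component of the
  state conjugate to \<open>f\<close>, the direction \<open>J f\<close>, and over a field this yields the same union of
  post-measurement states.\<close>

lemma sum_lessThan_double:
  fixes a :: "nat \<Rightarrow> 'b::comm_monoid_add"
  shows "(\<Sum>j<2*n. a j) = (\<Sum>i<n. a (2*i) + a (2*i+1))"
  by (induction n) (simp_all add: add.assoc)

lemma sum_lessThan_add:
  fixes g :: "nat \<Rightarrow> 'b::comm_monoid_add"
  shows "(\<Sum>i<m+n. g i) = (\<Sum>i<m. g i) + (\<Sum>i<n. g (m + i))"
  by (induction n) (simp_all add: add.assoc)

lemma mult_mat_vec_smult:
  fixes A :: "'a::comm_ring_1 mat"
  assumes "A \<in> carrier_mat nr nc" and "v \<in> carrier_vec nc"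
  shows "A *\<^sub>v (k \<cdot>\<^sub>v v) = k \<cdot>\<^sub>v (A *\<^sub>v v)"
  using assms by (auto intro!: eq_vecI simp: scalar_prod_smult_distrib)

lemma mat_eq_by_mult_vec:
  fixes A B :: "'a::comm_ring_1 mat"
  assumes A: "A \<in> carrier_mat n m" and B: "B \<in> carrier_mat n m"
    and eq: "\<And>v. v \<in> carrier_vec m \<Longrightarrow> A *\<^sub>v v = B *\<^sub>v v"
  shows "A = B"
proof (rule eq_matI)
  fix i j assume i: "i < dim_row B" and j: "j < dim_col B"
  have "A $$ (i,j) = (A *\<^sub>v unit_vec m j) $ i" using A B i j by simp
  also have "\<dots> = (B *\<^sub>v unit_vec m j) $ i" using eq by simp
  also have "\<dots> = B $$ (i,j)" using B i j by simp
  finally show "A $$ (i,j) = B $$ (i,j)" .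
qed (use A B in auto)

lemma mult_mat_vec_cancel:
  fixes A B :: "'a::comm_ring_1 mat"
  assumes "A * B = 1\<^sub>m n" "A \<in> carrier_mat n n" "B \<in> carrier_mat n n" "v \<in> carrier_vec n"
  shows "A *\<^sub>v (B *\<^sub>v v) = v"
  using assoc_mult_mat_vec[OF assms(2-4)] assms(1,4) by simp

text \<open>Since \<open>det L * det A = 1\<close>, the matrix \<open>det L \<cdot> adj A\<close> is a right inverse of \<open>A\<close>;
  it then coincides with the left inverse \<open>L\<close>.\<close>

lemma left_inverse_imp_right_inverse:
  fixes A L :: "'a::comm_ring_1 mat"
  assumes A: "A \<in> carrier_mat n n" and L: "L \<in> carrier_mat n n" and LA: "L * A = 1\<^sub>m n"
  shows "A * L = 1\<^sub>m n"
proof -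
  have det: "det L * det A = 1" using det_mult[OF L A] LA by simp
  define R where "R = det L \<cdot>\<^sub>m adj_mat A"
  have R: "R \<in> carrier_mat n n" unfolding R_def using adj_mat(1)[OF A] by simp
  have "A * R = det L \<cdot>\<^sub>m (A * adj_mat A)"
    unfolding R_def by (rule mult_smult_distrib[OF A adj_mat(1)[OF A]])
  also have "\<dots> = 1\<^sub>m n"
    using adj_mat(2)[OF A] det by (auto intro!: eq_matI)
  finally have AR: "A * R = 1\<^sub>m n" .
  have "L = L * (A * R)" using AR L by simp
  also have "\<dots> = (L * A) * R" using L A R by (simp add: assoc_mult_mat)
  also have "\<dots> = R" using LA R by simp
  finally show ?thesis using AR by simp
qed

lemma minv_eq:
  fixes A B :: "'a::comm_ring_1 mat"
  assumes A: "A \<in> carrier_mat n n" and B: "B \<in> carrier_mat n n"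
    and AB: "A * B = 1\<^sub>m n" and BA: "B * A = 1\<^sub>m n"
  shows "minv n A = B"
  unfolding minv_def
proof (rule the_equality)
  fix C assume "C \<in> carrier_mat n n \<and> A * C = 1\<^sub>m n \<and> C * A = 1\<^sub>m n"
  then have C: "C \<in> carrier_mat n n" and CA: "C * A = 1\<^sub>m n" by auto
  have "C = C * (A * B)" using AB C by simp
  also have "\<dots> = (C * A) * B" using A B C by (simp add: assoc_mult_mat)
  also have "\<dots> = B" using CA B by simp
  finally show "C = B" .
qed (use assms in simp)

lemma minv_transpose:
  fixes A B :: "'a::comm_ring_1 mat"
  assumes A: "A \<in> carrier_mat n n" and B: "B \<in> carrier_mat n n"
    and AB: "A * B = 1\<^sub>m n" and BA: "B * A = 1\<^sub>m n"
  shows "minv n (transpose_mat A) = transpose_mat B"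
proof (rule minv_eq)
  show "transpose_mat A * transpose_mat B = 1\<^sub>m n"
    using transpose_mult[OF B A] BA by (metis transpose_one)
  show "transpose_mat B * transpose_mat A = 1\<^sub>m n"
    using transpose_mult[OF A B] AB by (metis transpose_one)
qed (use A B in simp_all)

lemma mult_conj_inverse:
  fixes P Q A B :: "'a::comm_ring_1 mat"
  assumes P: "P \<in> carrier_mat n n" and Q: "Q \<in> carrier_mat n n"
    and A: "A \<in> carrier_mat n n" and B: "B \<in> carrier_mat n n"
    and PQ: "P * Q = 1\<^sub>m n" and QP: "Q * P = 1\<^sub>m n" and AB: "A * B = 1\<^sub>m n"
  shows "(P * A * Q) * (P * B * Q) = 1\<^sub>m n"
proof -
  have "(P * A * Q) * (P * B * Q) = P * A * (Q * P) * B * Q"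
    using P Q A B by (simp add: assoc_mult_mat[of _ n n _ n _ n])
  also have "\<dots> = P * (A * B) * Q"
    using P Q A B QP by (simp add: assoc_mult_mat[of _ n n _ n _ n])
  finally show ?thesis using P Q PQ AB by simp
qed

lemma transpose_inverse_scalar_prod:
  fixes A B :: "'a::comm_ring_1 mat"
  assumes A: "A \<in> carrier_mat n n" and B: "B \<in> carrier_mat n n" and BA: "B * A = 1\<^sub>m n"
    and u: "u \<in> carrier_vec n" and z: "z \<in> carrier_vec n"
  shows "(transpose_mat B *\<^sub>v u) \<bullet> (A *\<^sub>v z) = u \<bullet> z"
  using transpose_vec_mult_scalar[OF B _ u, of "A *\<^sub>v z"] mult_mat_vec_cancel[OF BA B A z] A z
  by simp

lemma append_vec_cases:
  assumes "x \<in> carrier_vec (n + m)"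
  obtains a b where "x = a @\<^sub>v b" "a \<in> carrier_vec n" "b \<in> carrier_vec m"
  by (rule that[of "vec_first x n" "vec_last x m"]) (use vec_first_last_append[OF assms] in auto)

lemma vec_first_append: "a \<in> carrier_vec n \<Longrightarrow> vec_first (a @\<^sub>v b) n = a"
  unfolding vec_first_def by (auto intro!: eq_vecI)

lemma vec_last_append: "b \<in> carrier_vec m \<Longrightarrow> vec_last (a @\<^sub>v b) m = b"
  unfolding vec_last_def by (auto intro!: eq_vecI)

lemma dsum_carrier:
  assumes "A \<in> carrier_mat n1 m1" and "B \<in> carrier_mat n2 m2"
  shows "A \<oplus>\<^sub>m B \<in> carrier_mat (n1 + n2) (m1 + m2)"
  using assms unfolding dsum_def by simp

lemma dsum_mult_vec:
  assumes A: "A \<in> carrier_mat n1 m1" and B: "B \<in> carrier_mat n2 m2"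
    and a: "a \<in> carrier_vec m1" and b: "b \<in> carrier_vec m2"
  shows "(A \<oplus>\<^sub>m B) *\<^sub>v (a @\<^sub>v b) = (A *\<^sub>v a) @\<^sub>v (B *\<^sub>v b)"
proof -
  have "0\<^sub>m n1 m2 *\<^sub>v b = 0\<^sub>v n1" and "0\<^sub>m n2 m1 *\<^sub>v a = 0\<^sub>v n2"
    using a b by (auto intro!: eq_vecI)
  then show ?thesis unfolding dsum_def
    using four_block_mat_mult_vec[OF A zero_carrier_mat zero_carrier_mat B a b] A B a b by simp
qed

lemma dsum_mult:
  assumes "A \<in> carrier_mat n1 k1" and "B \<in> carrier_mat n2 k2"
    and "C \<in> carrier_mat k1 m1" and "D \<in> carrier_mat k2 m2"
  shows "(A \<oplus>\<^sub>m B) * (C \<oplus>\<^sub>m D) = (A * C) \<oplus>\<^sub>m (B * D)"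
  unfolding dsum_def using assms by (subst mult_four_block_mat) auto

lemma dsum_one: "1\<^sub>m n \<oplus>\<^sub>m 1\<^sub>m m = (1\<^sub>m (n + m) :: 'a::comm_ring_1 mat)"
  unfolding dsum_def by simp

section \<open>The symplectic form\<close>

definition J_mat :: "nat \<Rightarrow> 'a::comm_ring_1 mat" where
  "J_mat n = mat (2*n) (2*n)
     (\<lambda>(i, j). if even i \<and> j = i + 1 then 1 else if odd i \<and> i = j + 1 then -1 else 0)"

lemma J_mat_carrier [simp]: "J_mat n \<in> carrier_mat (2*n) (2*n)"
  and dim_row_J_mat [simp]: "dim_row (J_mat n) = 2*n"
  and dim_col_J_mat [simp]: "dim_col (J_mat n) = 2*n"
  unfolding J_mat_def by simp_all

lemma J_mat_mult_vec_index:
  assumes g: "g \<in> carrier_vec (2*n)" and i: "i < 2*n"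
  shows "(J_mat n *\<^sub>v g) $ i = (if even i then g $ (i+1) else - g $ (i-1))"
proof -
  define k where "k = (if even i then i + 1 else i - 1)"
  have k: "k < 2*n" unfolding k_def using i by (auto elim!: evenE)
  have "(J_mat n *\<^sub>v g) $ i = (\<Sum>j\<in>{0..<2*n}. J_mat n $$ (i,j) * g $ j)"
    using g i by (simp add: scalar_prod_def J_mat_def)
  also have "\<dots> = (\<Sum>j\<in>{0..<2*n}. if j = k then (if even i then 1 else -1) * g $ j else 0)"
    using i by (intro sum.cong) (auto simp: J_mat_def k_def)
  also have "\<dots> = (if even i then g $ (i+1) else - g $ (i-1))"
    using k by (simp add: k_def)
  finally show ?thesis .
qed

lemma J_mat_mult_vec_carrier [simp]: "g \<in> carrier_vec (2*n) \<Longrightarrow> J_mat n *\<^sub>v g \<in> carrier_vec (2*n)"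
  by (rule mult_mat_vec_carrier[OF J_mat_carrier])

lemma poisson_eq_J_mat:
  assumes g: "g \<in> carrier_vec (2*n)"
  shows "poisson n f g = f \<bullet> (J_mat n *\<^sub>v g)"
proof -
  have "f \<bullet> (J_mat n *\<^sub>v g) = (\<Sum>j<2*n. f $ j * (J_mat n *\<^sub>v g) $ j)"
    unfolding scalar_prod_def by (simp del: index_mult_mat_vec add: lessThan_atLeast0)
  also have "\<dots> = poisson n f g"
    unfolding sum_lessThan_double poisson_def
    by (rule sum.cong) (auto simp del: index_mult_mat_vec simp: J_mat_mult_vec_index[OF g])
  finally show ?thesis by simp
qed

lemma poisson_self [simp]: "poisson n f f = 0"
  unfolding poisson_def by (simp add: mult.commute)

lemma J_mat_J_mat:
  assumes g: "g \<in> carrier_vec (2*n)"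
  shows "J_mat n *\<^sub>v (J_mat n *\<^sub>v g) = - g"
proof (rule eq_vecI)
  fix i assume "i < dim_vec (- g)"
  then have i: "i < 2*n" using g by simp
  then show "(J_mat n *\<^sub>v (J_mat n *\<^sub>v g)) $ i = (- g) $ i"
    using g by (cases "even i")
      (auto simp del: index_mult_mat_vec simp: J_mat_mult_vec_index elim!: evenE oddE)
qed (use g in simp)

lemma J_mat_unit_vec_1:
  assumes "n \<ge> 1"
  shows "J_mat n *\<^sub>v unit_vec (2*n) 1 = (unit_vec (2*n) 0 :: 'a::comm_ring_1 vec)"
proof (rule eq_vecI)
  fix i assume "i < dim_vec (unit_vec (2*n) 0 :: 'a vec)"
  then have i: "i < 2*n" by simp
  then show "(J_mat n *\<^sub>v unit_vec (2*n) 1) $ i = (unit_vec (2*n) 0 :: 'a vec) $ i"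
    using assms by (cases "even i")
      (auto simp del: index_mult_mat_vec simp: J_mat_mult_vec_index elim!: evenE oddE)
qed simp

lemma symplectic_carrier: "symplectic n S \<Longrightarrow> S \<in> carrier_mat (2*n) (2*n)"
  unfolding symplectic_def by simp

lemma symplectic_transpose_J:
  assumes S: "symplectic n S" and b: "b \<in> carrier_vec (2*n)"
  shows "transpose_mat S *\<^sub>v (J_mat n *\<^sub>v (S *\<^sub>v b)) = J_mat n *\<^sub>v b"
proof (rule eq_vecI)
  have Sc: "S \<in> carrier_mat (2*n) (2*n)" using S by (rule symplectic_carrier)
  fix j assume "j < dim_vec (J_mat n *\<^sub>v b)"
  then have j: "j < 2*n" by simp
  let ?e = "unit_vec (2*n) j :: 'a vec"
  let ?x = "J_mat n *\<^sub>v (S *\<^sub>v b)"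
  have x: "?x \<in> carrier_vec (2*n)" using Sc b by simp
  have "(transpose_mat S *\<^sub>v ?x) $ j = (transpose_mat S *\<^sub>v ?x) \<bullet> ?e"
    using j by simp
  also have "\<dots> = ?x \<bullet> (S *\<^sub>v ?e)"
    by (rule transpose_vec_mult_scalar[OF Sc _ x]) simp
  also have "\<dots> = poisson n (S *\<^sub>v ?e) (S *\<^sub>v b)"
    using Sc b x by (simp add: poisson_eq_J_mat comm_scalar_prod[of _ "2*n"])
  also have "\<dots> = poisson n ?e b"
    using S b unfolding symplectic_def by simp
  also have "\<dots> = (J_mat n *\<^sub>v b) $ j"
    using j b by (simp add: poisson_eq_J_mat)
  finally show "(transpose_mat S *\<^sub>v ?x) $ j = (J_mat n *\<^sub>v b) $ j" .
qed (use symplectic_carrier[OF S] in simp)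

lemma symplectic_inverse:
  assumes S: "symplectic n S"
  shows "minv (2*n) S \<in> carrier_mat (2*n) (2*n)"
    and "S * minv (2*n) S = 1\<^sub>m (2*n)" and "minv (2*n) S * S = 1\<^sub>m (2*n)"
proof -
  have Sc: "S \<in> carrier_mat (2*n) (2*n)" using S by (rule symplectic_carrier)
  have St: "transpose_mat S \<in> carrier_mat (2*n) (2*n)" using Sc by simp
  define M where "M = transpose_mat S * J_mat n"
  have M: "M \<in> carrier_mat (2*n) (2*n)" unfolding M_def using St by simp
  define L where "L = - (J_mat n * M)"
  have L: "L \<in> carrier_mat (2*n) (2*n)" unfolding L_def using mult_carrier_mat[OF J_mat_carrier M] by simp
  have LS: "L * S = 1\<^sub>m (2*n)"
  proof (rule mat_eq_by_mult_vec)
    fix b :: "'a vec" assume b: "b \<in> carrier_vec (2*n)"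
    have Sb: "S *\<^sub>v b \<in> carrier_vec (2*n)" using Sc b by simp
    have "(L * S) *\<^sub>v b = L *\<^sub>v (S *\<^sub>v b)" by (rule assoc_mult_mat_vec[OF L Sc b])
    also have "\<dots> = - (J_mat n *\<^sub>v (M *\<^sub>v (S *\<^sub>v b)))"
      unfolding L_def using M Sb Sc
      by (subst uminus_mult_mat_vec) (simp_all add: assoc_mult_mat_vec[OF J_mat_carrier M Sb])
    also have "\<dots> = - (J_mat n *\<^sub>v (transpose_mat S *\<^sub>v (J_mat n *\<^sub>v (S *\<^sub>v b))))"
      unfolding M_def using assoc_mult_mat_vec[OF St J_mat_carrier Sb] by simp
    also have "\<dots> = b"
      using b by (simp add: symplectic_transpose_J[OF S b] J_mat_J_mat)
    finally show "(L * S) *\<^sub>v b = 1\<^sub>m (2*n) *\<^sub>v b" using b by simp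
  qed (use L Sc in auto)
  have SL: "S * L = 1\<^sub>m (2*n)" by (rule left_inverse_imp_right_inverse[OF Sc L LS])
  have "minv (2*n) S = L" by (rule minv_eq[OF Sc L SL LS])
  then show "minv (2*n) S \<in> carrier_mat (2*n) (2*n)"
    and "S * minv (2*n) S = 1\<^sub>m (2*n)" and "minv (2*n) S * S = 1\<^sub>m (2*n)"
    using L SL LS by simp_all
qed

lemma poisson_append:
  assumes a: "a \<in> carrier_vec (2*m)" and b: "b \<in> carrier_vec (2*n)"
    and c: "c \<in> carrier_vec (2*m)" and d: "d \<in> carrier_vec (2*n)"
  shows "poisson (m + n) (a @\<^sub>v b) (c @\<^sub>v d) = poisson m a c + poisson n b d"
proof -
  have "poisson (m + n) (a @\<^sub>v b) (c @\<^sub>v d) =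
    (\<Sum>i<m. a $ (2*i) * c $ (2*i+1) - a $ (2*i+1) * c $ (2*i)) +
    (\<Sum>i<n. b $ (2*i) * d $ (2*i+1) - b $ (2*i+1) * d $ (2*i))"
    unfolding poisson_def sum_lessThan_add using a b c d
    by (intro arg_cong2[where f = "(+)"] sum.cong) auto
  then show ?thesis unfolding poisson_def .
qed

lemma poisson_add_smult_unit_vec_1:
  assumes n: "n \<ge> 1" and b: "b \<in> carrier_vec (2*n)" and d: "d \<in> carrier_vec (2*n)"
  shows "poisson n (b + s \<cdot>\<^sub>v unit_vec (2*n) 1) (d + r \<cdot>\<^sub>v unit_vec (2*n) 1)
    = poisson n b d + r * b $ 0 - s * d $ 0"
proof -
  have "poisson n (b + s \<cdot>\<^sub>v unit_vec (2*n) 1) (d + r \<cdot>\<^sub>v unit_vec (2*n) 1) =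
    (\<Sum>i<n. (b $ (2*i) * d $ (2*i+1) - b $ (2*i+1) * d $ (2*i))
      + (if i = 0 then r * b $ 0 - s * d $ 0 else 0))"
    unfolding poisson_def using b d by (intro sum.cong) (auto simp: algebra_simps)
  also have "\<dots> = poisson n b d + r * b $ 0 - s * d $ 0"
    using n by (simp add: sum.distrib poisson_def)
  finally show ?thesis .
qed

text \<open>Apply \<open>S\<^sup>-\<^sup>T\<close> to \<open>S\<^sup>T J S e\<^sub>1 = J e\<^sub>1 = e\<^sub>0\<close>.\<close>

lemma symplectic_transformed_position:
  assumes S: "symplectic n S" and n: "n \<ge> 1"
  shows "minv (2*n) (transpose_mat S) *\<^sub>v unit_vec (2*n) 0 = J_mat n *\<^sub>v (S *\<^sub>v unit_vec (2*n) 1)"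
proof -
  note Si = symplectic_inverse[OF S]
  have Sc: "S \<in> carrier_mat (2*n) (2*n)" using S by (rule symplectic_carrier)
  have e1: "unit_vec (2*n) 1 \<in> carrier_vec (2*n)" by simp
  have x: "J_mat n *\<^sub>v (S *\<^sub>v unit_vec (2*n) 1) \<in> carrier_vec (2*n)" using Sc by simp
  have "minv (2*n) (transpose_mat S) *\<^sub>v unit_vec (2*n) 0
      = transpose_mat (minv (2*n) S) *\<^sub>v (transpose_mat S *\<^sub>v (J_mat n *\<^sub>v (S *\<^sub>v unit_vec (2*n) 1)))"
    unfolding minv_transpose[OF Sc Si] symplectic_transpose_J[OF S e1] J_mat_unit_vec_1[OF n] ..
  also have "\<dots> = (transpose_mat (minv (2*n) S) * transpose_mat S) *\<^sub>v
      (J_mat n *\<^sub>v (S *\<^sub>v unit_vec (2*n) 1))"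
    using Sc Si(1) x by simp
  also have "transpose_mat (minv (2*n) S) * transpose_mat S = 1\<^sub>m (2*n)"
    using transpose_mult[OF Sc Si(1)] Si(2) by (metis transpose_one)
  finally show ?thesis using x by simp
qed

section \<open>The map \<open>\<Phi>\<close>\<close>

lemma Phi_carrier [simp]: "Phi N \<in> carrier_mat (2 + 2*N) (2 + 2*N)"
  and dim_row_Phi [simp]: "dim_row (Phi N) = 2 + 2*N"
  and dim_col_Phi [simp]: "dim_col (Phi N) = 2 + 2*N"
  unfolding Phi_def by simp_all

lemma Phi_mult_vec_index:
  assumes N: "N \<ge> 1" and z: "z \<in> carrier_vec (2 + 2*N)" and i: "i < 2 + 2*N"
  shows "(Phi N *\<^sub>v z) $ i = z $ i + (if i = 0 then z $ 2 else 0) - (if i = 3 then z $ 1 else 0)"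
proof -
  have "(Phi N *\<^sub>v z) $ i = (\<Sum>j\<in>{0..<2+2*N}. row (Phi N) i $ j * z $ j)"
    using i z by (simp add: scalar_prod_def Phi_def)
  also have "\<dots> = (\<Sum>j\<in>{0..<2+2*N}. (if j = i then z $ i else 0)
      + (if j = 2 then (if i = 0 then z $ 2 else 0) else 0)
      - (if j = 1 then (if i = 3 then z $ 1 else 0) else 0))"
    using i by (intro sum.cong) (auto simp: Phi_def)
  also have "\<dots> = z $ i + (if i = 0 then z $ 2 else 0) - (if i = 3 then z $ 1 else 0)"
    using i N by (simp add: sum.distrib sum_subtractf)
  finally show ?thesis .
qed

lemma Phi_mult_append:
  assumes N: "N \<ge> 1" and a: "a \<in> carrier_vec 2" and b: "b \<in> carrier_vec (2*N)"
  shows "Phi N *\<^sub>v (a @\<^sub>v b) =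
    (a + b $ 0 \<cdot>\<^sub>v unit_vec 2 0) @\<^sub>v (b + (- a $ 1) \<cdot>\<^sub>v unit_vec (2*N) 1)"
proof (rule eq_vecI)
  have z: "a @\<^sub>v b \<in> carrier_vec (2 + 2*N)" using a b by (rule append_carrier_vec)
  fix i assume "i < dim_vec ((a + b $ 0 \<cdot>\<^sub>v unit_vec 2 0) @\<^sub>v (b + (- a $ 1) \<cdot>\<^sub>v unit_vec (2*N) 1))"
  then have i: "i < 2 + 2*N" using a b by simp
  show "(Phi N *\<^sub>v (a @\<^sub>v b)) $ i =
    ((a + b $ 0 \<cdot>\<^sub>v unit_vec 2 0) @\<^sub>v (b + (- a $ 1) \<cdot>\<^sub>v unit_vec (2*N) 1)) $ i"
    unfolding Phi_mult_vec_index[OF N z i]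
    using i a b N by (cases "i < 2"; cases "i = 0"; cases "i = 1"; cases "i = 3") (auto simp: unit_vec_def)
qed (use a b in simp)

lemma Phi_symplectic:
  assumes N: "N \<ge> 1"
  shows "symplectic (1 + N) (Phi N)"
  unfolding symplectic_def
proof (intro conjI ballI)
  show "Phi N \<in> carrier_mat (2 * (1 + N)) (2 * (1 + N))" using Phi_carrier[of N] by simp
  fix x y :: "'a vec"
  assume "x \<in> carrier_vec (2 * (1 + N))" and "y \<in> carrier_vec (2 * (1 + N))"
  then have "x \<in> carrier_vec (2 + 2*N)" and "y \<in> carrier_vec (2 + 2*N)" by simp_all
  then obtain a b c d where x: "x = a @\<^sub>v b" and y: "y = c @\<^sub>v d"
    and a: "a \<in> carrier_vec 2" and b: "b \<in> carrier_vec (2*N)"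
    and c: "c \<in> carrier_vec 2" and d: "d \<in> carrier_vec (2*N)"
    by (metis append_vec_cases)
  have poisson_split: "poisson (1 + N) (a' @\<^sub>v b') (c' @\<^sub>v d') = poisson 1 a' c' + poisson N b' d'"
    if "a' \<in> carrier_vec 2" "b' \<in> carrier_vec (2*N)" "c' \<in> carrier_vec 2" "d' \<in> carrier_vec (2*N)"
    for a' b' c' d' :: "'a vec"
    using poisson_append[of a' 1 b' N c' d'] that by simp
  have poisson_1: "poisson 1 u u' = u $ 0 * u' $ 1 - u $ 1 * u' $ 0" for u u' :: "'a vec"
    by (simp add: poisson_def)
  have "poisson (1 + N) (Phi N *\<^sub>v x) (Phi N *\<^sub>v y) =
    poisson 1 (a + b $ 0 \<cdot>\<^sub>v unit_vec 2 0) (c + d $ 0 \<cdot>\<^sub>v unit_vec 2 0) +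
    poisson N (b + (- a $ 1) \<cdot>\<^sub>v unit_vec (2*N) 1) (d + (- c $ 1) \<cdot>\<^sub>v unit_vec (2*N) 1)"
    unfolding x y Phi_mult_append[OF N a b] Phi_mult_append[OF N c d]
    using a b c d by (intro poisson_split) simp_all
  also have "\<dots> = poisson 1 a c + poisson N b d"
    using a c unfolding poisson_add_smult_unit_vec_1[OF N b d] poisson_1
    by (simp add: algebra_simps)
  also have "\<dots> = poisson (1 + N) x y"
    unfolding x y by (rule poisson_split[OF a b c d, symmetric])
  finally show "poisson (1 + N) (Phi N *\<^sub>v x) (Phi N *\<^sub>v y) = poisson (1 + N) x y" .
qed

section \<open>Epistemic states\<close>

lemma perp_act_space:
  fixes \<Gamma> G :: "'a::comm_ring_1 mat"
  assumes \<Gamma>: "\<Gamma> \<in> carrier_mat (2*n) (2*n)" and G: "G \<in> carrier_mat (2*n) (2*n)"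
    and \<Gamma>G: "\<Gamma> * G = 1\<^sub>m (2*n)" and G\<Gamma>: "G * \<Gamma> = 1\<^sub>m (2*n)"
    and V: "V \<subseteq> carrier_vec (2*n)"
  shows "perp n (act_space n \<Gamma> V) = (\<lambda>z. \<Gamma> *\<^sub>v z) ` perp n V"
proof -
  have act: "act_space n \<Gamma> V = (\<lambda>g. transpose_mat G *\<^sub>v g) ` V"
    unfolding act_space_def minv_transpose[OF \<Gamma> G \<Gamma>G G\<Gamma>] ..
  have dual: "(transpose_mat G *\<^sub>v g) \<bullet> u = g \<bullet> (G *\<^sub>v u)"
    if "g \<in> V" "u \<in> carrier_vec (2*n)" for g u
    using transpose_vec_mult_scalar[OF G] that V by blast
  have perp_iff: "u \<in> perp n (act_space n \<Gamma> V) \<longleftrightarrow> u \<in> carrier_vec (2*n) \<and> G *\<^sub>v u \<in> perp n V"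
    for u
    using G unfolding perp_def act by (auto simp: dual)
  show ?thesis
  proof (intro equalityI subsetI)
    fix u assume "u \<in> perp n (act_space n \<Gamma> V)"
    then have u: "u \<in> carrier_vec (2*n)" and Gu: "G *\<^sub>v u \<in> perp n V" using perp_iff by auto
    have "u = \<Gamma> *\<^sub>v (G *\<^sub>v u)" using mult_mat_vec_cancel[OF \<Gamma>G \<Gamma> G u] by simp
    then show "u \<in> (\<lambda>z. \<Gamma> *\<^sub>v z) ` perp n V" using Gu by blast
  next
    fix u assume "u \<in> (\<lambda>z. \<Gamma> *\<^sub>v z) ` perp n V"
    then obtain p where p: "p \<in> perp n V" and u: "u = \<Gamma> *\<^sub>v p" by blast
    have pc: "p \<in> carrier_vec (2*n)" using p unfolding perp_def by simp
    show "u \<in> perp n (act_space n \<Gamma> V)"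
      unfolding perp_iff u using \<Gamma> pc p mult_mat_vec_cancel[OF G\<Gamma> G \<Gamma> pc] by simp
  qed
qed

lemma compat_act:
  fixes \<Gamma> G :: "'a::comm_ring_1 mat"
  assumes \<Gamma>: "\<Gamma> \<in> carrier_mat (2*n) (2*n)" and G: "G \<in> carrier_mat (2*n) (2*n)"
    and \<Gamma>G: "\<Gamma> * G = 1\<^sub>m (2*n)" and G\<Gamma>: "G * \<Gamma> = 1\<^sub>m (2*n)"
    and V: "V \<subseteq> carrier_vec (2*n)" and v: "v \<in> carrier_vec (2*n)"
  shows "compat n (act_space n \<Gamma> V) (act_vec \<Gamma> v) = (\<lambda>z. \<Gamma> *\<^sub>v z) ` compat n V v"
proof -
  have "\<Gamma> *\<^sub>v u + \<Gamma> *\<^sub>v v = \<Gamma> *\<^sub>v (u + v)" if "u \<in> perp n V" for u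
    using that v \<Gamma> unfolding perp_def by (simp add: mult_add_distrib_mat_vec)
  then show ?thesis
    unfolding compat_def perp_act_space[OF assms(1-5)] act_vec_def Setcompr_eq_image image_image
    by (intro image_cong) simp_all
qed

lemma lin_span_Nil: "lin_span m [] = {0\<^sub>v m}"
  unfolding lin_span_def by simp

lemma lin_span_Cons: "lin_span m (g # gs) = {c \<cdot>\<^sub>v g + x | c x. x \<in> lin_span m gs}"
proof (intro equalityI subsetI)
  fix x assume "x \<in> lin_span m (g # gs)"
  then obtain c cs where "length cs = length gs"
    and "x = c \<cdot>\<^sub>v g + foldr (+) (map (\<lambda>(c, g). c \<cdot>\<^sub>v g) (zip cs gs)) (0\<^sub>v m)"
    unfolding lin_span_def by (auto simp: length_Suc_conv)
  then show "x \<in> {c \<cdot>\<^sub>v g + x | c x. x \<in> lin_span m gs}" unfolding lin_span_def by blast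
next
  fix x assume "x \<in> {c \<cdot>\<^sub>v g + x | c x. x \<in> lin_span m gs}"
  then obtain c cs where "length cs = length gs"
    and "x = c \<cdot>\<^sub>v g + foldr (+) (map (\<lambda>(c, g). c \<cdot>\<^sub>v g) (zip cs gs)) (0\<^sub>v m)"
    unfolding lin_span_def by blast
  then show "x \<in> lin_span m (g # gs)" unfolding lin_span_def by (intro CollectI exI[of _ "c # cs"]) simp
qed

lemma lin_span_carrier: "set gs \<subseteq> carrier_vec m \<Longrightarrow> lin_span m gs \<subseteq> carrier_vec m"
  by (induction gs) (auto simp: lin_span_Nil lin_span_Cons)

lemma zero_in_lin_span: "set gs \<subseteq> carrier_vec m \<Longrightarrow> 0\<^sub>v m \<in> lin_span m gs"
proof (induction gs)
  case (Cons g gs)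
  then have "0\<^sub>v m = 0 \<cdot>\<^sub>v g + 0\<^sub>v m" and "0\<^sub>v m \<in> lin_span m gs" by auto
  then show ?case unfolding lin_span_Cons by blast
qed (simp add: lin_span_Nil)

lemma generator_in_lin_span: "set gs \<subseteq> carrier_vec m \<Longrightarrow> g \<in> set gs \<Longrightarrow> g \<in> lin_span m gs"
proof (induction gs)
  case (Cons h gs)
  show ?case
  proof (cases "g = h")
    case True
    have "h = 1 \<cdot>\<^sub>v h + 0\<^sub>v m" and "0\<^sub>v m \<in> lin_span m gs"
      using Cons.prems zero_in_lin_span[of gs m] by auto
    then show ?thesis unfolding lin_span_Cons True by blast
  next
    case False
    then have g: "g \<in> set gs" using Cons.prems by simp
    then have gc: "g \<in> carrier_vec m" using Cons.prems by auto
    have "g \<in> lin_span m gs" using g Cons by simp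
    moreover have "g = 0 \<cdot>\<^sub>v h + g" using gc Cons.prems by auto
    ultimately show ?thesis unfolding lin_span_Cons by blast
  qed
qed simp

lemma lin_span_orth:
  assumes "set gs \<subseteq> carrier_vec m" and "u \<in> carrier_vec m" and "\<forall>g\<in>set gs. g \<bullet> u = 0"
  shows "x \<in> lin_span m gs \<Longrightarrow> x \<bullet> u = 0"
  using assms
proof (induction gs arbitrary: x)
  case (Cons g gs)
  then obtain c y where x: "x = c \<cdot>\<^sub>v g + y" and y: "y \<in> lin_span m gs"
    by (auto simp: lin_span_Cons)
  have "y \<in> carrier_vec m" using y lin_span_carrier[of gs m] Cons.prems by auto
  then show ?case unfolding x using Cons y by (simp add: add_scalar_prod_distrib[of _ m])
qed (simp add: lin_span_Nil)

lemma perp_lin_span: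
  assumes "set gs \<subseteq> carrier_vec (2*n)"
  shows "perp n (lin_span (2*n) gs) = {u \<in> carrier_vec (2*n). \<forall>g\<in>set gs. g \<bullet> u = 0}"
  unfolding perp_def using assms lin_span_orth[OF assms] generator_in_lin_span[OF assms] by blast

lemma lin_span_single:
  assumes "f \<in> carrier_vec m"
  shows "lin_span m [f] = {c \<cdot>\<^sub>v f | c. True}"
  using assms by (auto simp: lin_span_Cons lin_span_Nil)

lemma perp_product:
  assumes as: "set as \<subseteq> carrier_vec (2*M)" and bs: "set bs \<subseteq> carrier_vec (2*N)"
  shows "perp (M + N)
      (lin_span (2*M + 2*N) (map (\<lambda>a. a @\<^sub>v 0\<^sub>v (2*N)) as @ map (\<lambda>b. 0\<^sub>v (2*M) @\<^sub>v b) bs))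
    = {x @\<^sub>v y | x y. x \<in> perp M (lin_span (2*M) as) \<and> y \<in> perp N (lin_span (2*N) bs)}"
    (is "perp (M + N) (lin_span _ ?gs) = ?R")
proof -
  have "set ?gs \<subseteq> carrier_vec (2 * (M + N))" using as bs by auto
  from perp_lin_span[OF this]
  have perp_gs: "perp (M + N) (lin_span (2*M + 2*N) ?gs)
      = {u \<in> carrier_vec (2*M + 2*N). \<forall>g\<in>set ?gs. g \<bullet> u = 0}"
    by (simp add: distrib_left)
  have orth_iff: "(\<forall>g\<in>set ?gs. g \<bullet> (x @\<^sub>v y) = 0) \<longleftrightarrow>
      (\<forall>a\<in>set as. a \<bullet> x = 0) \<and> (\<forall>b\<in>set bs. b \<bullet> y = 0)"
    if x: "x \<in> carrier_vec (2*M)" and y: "y \<in> carrier_vec (2*N)" for x y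
  proof -
    have "(\<forall>g\<in>set ?gs. g \<bullet> (x @\<^sub>v y) = 0) \<longleftrightarrow>
      (\<forall>a\<in>set as. (a @\<^sub>v 0\<^sub>v (2*N)) \<bullet> (x @\<^sub>v y) = 0) \<and>
      (\<forall>b\<in>set bs. (0\<^sub>v (2*M) @\<^sub>v b) \<bullet> (x @\<^sub>v y) = 0)"
      by auto
    also have "\<dots> \<longleftrightarrow> (\<forall>a\<in>set as. a \<bullet> x = 0) \<and> (\<forall>b\<in>set bs. b \<bullet> y = 0)"
      using as bs x y by (intro arg_cong2[where f = "(\<and>)"] ball_cong)
        (auto simp: scalar_prod_append[of _ "2*M" _ "2*N"] subsetD)
    finally show ?thesis .
  qed
  show ?thesis
  proof (intro equalityI subsetI)
    fix u assume "u \<in> perp (M + N) (lin_span (2*M + 2*N) ?gs)"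
    then have u: "u \<in> carrier_vec (2*M + 2*N)" and orth: "\<forall>g\<in>set ?gs. g \<bullet> u = 0"
      unfolding perp_gs by auto
    obtain x y where "u = x @\<^sub>v y" "x \<in> carrier_vec (2*M)" "y \<in> carrier_vec (2*N)"
      using u by (rule append_vec_cases)
    then show "u \<in> ?R" using orth orth_iff by (auto simp: perp_lin_span as bs)
  next
    fix u assume "u \<in> ?R"
    then obtain x y where "u = x @\<^sub>v y" "x \<in> perp M (lin_span (2*M) as)"
      "y \<in> perp N (lin_span (2*N) bs)" by blast
    then show "u \<in> perp (M + N) (lin_span (2*M + 2*N) ?gs)"
      unfolding perp_gs using orth_iff by (auto simp: perp_lin_span as bs)
  qed
qed

lemma compat_product:
  assumes as: "set as \<subseteq> carrier_vec (2*M)" and bs: "set bs \<subseteq> carrier_vec (2*N)"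
    and u: "u \<in> carrier_vec (2*M)" and w: "w \<in> carrier_vec (2*N)"
  shows "compat (M + N)
      (lin_span (2*M + 2*N) (map (\<lambda>a. a @\<^sub>v 0\<^sub>v (2*N)) as @ map (\<lambda>b. 0\<^sub>v (2*M) @\<^sub>v b) bs))
      (u @\<^sub>v w)
    = {x @\<^sub>v y | x y. x \<in> compat M (lin_span (2*M) as) u \<and> y \<in> compat N (lin_span (2*N) bs) w}"
proof -
  let ?P = "perp M (lin_span (2*M) as)" and ?Q = "perp N (lin_span (2*N) bs)"
  have add: "(x @\<^sub>v y) + (u @\<^sub>v w) = (x + u) @\<^sub>v (y + w)" if "x \<in> ?P" "y \<in> ?Q" for x y
    using that u w unfolding perp_def by (intro append_vec_add[of _ "2*M" _ _ "2*N"]) auto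
  show ?thesis unfolding compat_def perp_product[OF as bs]
  proof (intro equalityI subsetI)
    fix m assume "m \<in> {z + (u @\<^sub>v w) | z. z \<in> {x @\<^sub>v y | x y. x \<in> ?P \<and> y \<in> ?Q}}"
    then obtain x y where "m = (x @\<^sub>v y) + (u @\<^sub>v w)" "x \<in> ?P" "y \<in> ?Q" by blast
    then show "m \<in> {x @\<^sub>v y | x y. x \<in> {z + u | z. z \<in> ?P} \<and> y \<in> {z + w | z. z \<in> ?Q}}"
      using add by blast
  next
    fix m assume "m \<in> {x @\<^sub>v y | x y. x \<in> {z + u | z. z \<in> ?P} \<and> y \<in> {z + w | z. z \<in> ?Q}}"
    then obtain x y where m: "m = (x + u) @\<^sub>v (y + w)" and x: "x \<in> ?P" and y: "y \<in> ?Q" by blast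
    then have "m = (x @\<^sub>v y) + (u @\<^sub>v w)" using add by simp
    then show "m \<in> {z + (u @\<^sub>v w) | z. z \<in> {x @\<^sub>v y | x y. x \<in> ?P \<and> y \<in> ?Q}}"
      using x y by blast
  qed
qed

lemma initial_state_compat:
  assumes v: "v \<in> carrier_vec 2" and ws: "set ws \<subseteq> carrier_vec (2*N)" and w: "w \<in> carrier_vec (2*N)"
  shows "compat (1 + N) (lin_span (2 + 2*N) ((v @\<^sub>v 0\<^sub>v (2*N)) # map (\<lambda>wi. 0\<^sub>v 2 @\<^sub>v wi) ws))
      (0\<^sub>v 2 @\<^sub>v w)
    = {x @\<^sub>v y | x y. x \<in> carrier_vec 2 \<and> v \<bullet> x = 0 \<and> y \<in> compat N (lin_span (2*N) ws) w}"
proof -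
  have "compat 1 (lin_span 2 [v]) (0\<^sub>v 2) = {x \<in> carrier_vec 2. v \<bullet> x = 0}"
    using perp_lin_span[of "[v]" 1] v unfolding compat_def by force
  then show ?thesis
    using compat_product[of "[v]" 1 ws N "0\<^sub>v 2" w] v ws w by simp
qed

section \<open>Measurement of a single observable\<close>

lemma is_Zd_prime_inverse:
  fixes a :: "'a::comm_ring_1"
  assumes Zd: "is_Zd TYPE('a) d" and p: "prime d" and a: "a \<noteq> 0"
  shows "\<exists>b. a * b = 1"
proof -
  obtain \<phi> :: "'a \<Rightarrow> int" where d: "d \<ge> 2" and bij: "bij_betw \<phi> UNIV {0..<int d}"
    and one: "\<phi> 1 = 1"
    and hom: "\<And>x y. \<phi> (x + y) = (\<phi> x + \<phi> y) mod int d \<and> \<phi> (x * y) = (\<phi> x * \<phi> y) mod int d"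
    using Zd unfolding is_Zd_def by blast
  have range: "\<phi> x \<in> {0..<int d}" for x using bij by (auto dest: bij_betw_apply)
  have inj: "\<phi> x = \<phi> y \<Longrightarrow> x = y" for x y using bij unfolding bij_betw_def inj_on_def by blast
  have "(\<phi> 0 + \<phi> 0) mod int d = \<phi> 0 mod int d"
    using hom[of 0 0] range[of 0] by simp
  then have "int d dvd \<phi> 0" by (simp add: mod_eq_dvd_iff)
  then have "\<phi> 0 = 0" using range[of 0] by (auto dest: zdvd_imp_le)
  then have "\<phi> a \<noteq> 0" using a inj by metis
  define k where "k = nat (\<phi> a)"
  have k: "int k = \<phi> a" using range[of a] unfolding k_def by simp
  then have "0 < k" "k < d" using range[of a] \<open>\<phi> a \<noteq> 0\<close> by auto
  then have "\<not> d dvd k" by (auto dest: dvd_imp_le)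
  then obtain x y where "k * x = Suc (d * y)" using bezout_prime[OF p] by blast
  then have xy: "\<phi> a * int x = 1 + int d * int y"
    using k by (metis of_nat_Suc of_nat_mult add.commute)
  have "int x mod int d \<in> {0..<int d}" using d by simp
  then obtain b where b: "\<phi> b = int x mod int d"
    using bij unfolding bij_betw_def by (metis imageE)
  have "\<phi> (a * b) = (\<phi> a * int x) mod int d" using hom b by (simp add: mod_mult_right_eq)
  also have "\<dots> = \<phi> 1" using xy d one by simp
  finally show ?thesis using inj by blast
qed

lemma is_R_inverse:
  fixes a :: "'a::comm_ring_1"
  assumes R: "is_R TYPE('a)" and a: "a \<noteq> 0"
  shows "\<exists>b. a * b = 1"
proof -
  obtain \<phi> :: "'a \<Rightarrow> real" where bij: "bij \<phi>" and one: "\<phi> 1 = 1"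
    and hom: "\<And>x y. \<phi> (x + y) = \<phi> x + \<phi> y \<and> \<phi> (x * y) = \<phi> x * \<phi> y"
    using R unfolding is_R_def by blast
  have inj: "\<phi> x = \<phi> y \<Longrightarrow> x = y" for x y using bij unfolding bij_def inj_def by blast
  have "\<phi> 0 = 0" using hom[of 0 0] by simp
  then have "\<phi> a \<noteq> 0" using a inj by metis
  obtain b where "\<phi> b = 1 / \<phi> a" using bij unfolding bij_def surj_def by metis
  then have "\<phi> (a * b) = \<phi> 1" using hom \<open>\<phi> a \<noteq> 0\<close> one by simp
  then show ?thesis using inj by blast
qed

lemma scalar_prod_proportional:
  fixes d k :: "'a::comm_ring_1 vec"
  assumes inv: "\<And>a::'a. a \<noteq> 0 \<Longrightarrow> \<exists>b. a * b = 1"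
    and W: "submodule m W" and d: "d \<in> carrier_vec m" and k: "k \<in> carrier_vec m"
    and orth: "\<And>g. g \<in> W \<Longrightarrow> g \<bullet> k = 0 \<Longrightarrow> g \<bullet> d = 0"
  shows "\<exists>t. \<forall>g\<in>W. g \<bullet> d = t * (g \<bullet> k)"
proof (cases "\<forall>g\<in>W. g \<bullet> k = 0")
  case True
  then show ?thesis using orth by (intro exI[of _ 0]) auto
next
  case False
  then obtain g0 where g0: "g0 \<in> W" and g0k: "g0 \<bullet> k \<noteq> 0" by blast
  then obtain ai where ai: "(g0 \<bullet> k) * ai = 1" using inv by blast
  have Wc: "W \<subseteq> carrier_vec m" using W unfolding submodule_def by simp
  show ?thesis
  proof (intro exI[of _ "(g0 \<bullet> d) * ai"] ballI)
    fix g assume g: "g \<in> W"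
    \<comment> \<open>\<open>c\<close> is chosen so that \<open>g + c \<cdot> g0\<close> lies in the kernel of \<open>(\<bullet> k)\<close>.\<close>
    define c where "c = - ((g \<bullet> k) * ai)"
    have gc: "g \<in> carrier_vec m" and g0c: "g0 \<in> carrier_vec m" using g g0 Wc by auto
    have "g + c \<cdot>\<^sub>v g0 \<in> W" using W g g0 unfolding submodule_def by blast
    moreover have "(g + c \<cdot>\<^sub>v g0) \<bullet> k = g \<bullet> k - (g \<bullet> k) * ((g0 \<bullet> k) * ai)"
      using gc g0c k by (simp add: add_scalar_prod_distrib[of _ m] c_def algebra_simps)
    ultimately have "(g + c \<cdot>\<^sub>v g0) \<bullet> d = 0" using ai orth by simp
    moreover have "(g + c \<cdot>\<^sub>v g0) \<bullet> d = g \<bullet> d - (g0 \<bullet> d) * ai * (g \<bullet> k)"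
      using gc g0c d by (simp add: add_scalar_prod_distrib[of _ m] c_def algebra_simps)
    ultimately show "g \<bullet> d = (g0 \<bullet> d) * ai * (g \<bullet> k)" by simp
  qed
qed

lemma commuting_part_lin_span_single:
  assumes W: "W \<subseteq> carrier_vec (2*n)" and f: "f \<in> carrier_vec (2*n)"
  shows "commuting_part n W (lin_span (2*n) [f]) = {g \<in> W. g \<bullet> (J_mat n *\<^sub>v f) = 0}"
proof -
  have P: "poisson n g (c \<cdot>\<^sub>v f) = c * (g \<bullet> (J_mat n *\<^sub>v f))" if "g \<in> W" for g c
    using that W f by (auto simp: poisson_eq_J_mat mult_mat_vec_smult[OF J_mat_carrier f])
  have "(\<forall>h\<in>{c \<cdot>\<^sub>v f | c. True}. poisson n g h = 0) \<longleftrightarrow> g \<bullet> (J_mat n *\<^sub>v f) = 0"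
    if g: "g \<in> W" for g
  proof
    assume "\<forall>h\<in>{c \<cdot>\<^sub>v f | c. True}. poisson n g h = 0"
    then have "poisson n g (1 \<cdot>\<^sub>v f) = 0" by blast
    then show "g \<bullet> (J_mat n *\<^sub>v f) = 0" using P[OF g, of 1] by simp
  qed (use P[OF g] in auto)
  then show ?thesis unfolding commuting_part_def lin_span_single[OF f] by auto
qed

context
  fixes n :: nat and W :: "'a::comm_ring_1 vec set" and w f :: "'a vec"
  assumes W: "submodule (2*n) W" and w: "w \<in> carrier_vec (2*n)" and f: "f \<in> carrier_vec (2*n)"
begin

lemma post_measurement_compat_subset_shifts:
  assumes inv: "\<And>a::'a. a \<noteq> 0 \<Longrightarrow> \<exists>b. a * b = 1"
    and pm: "post_measurement n W w (lin_span (2*n) [f]) vpi V' v'" and m: "m \<in> compat n V' v'"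
  shows "\<exists>y t. m = y + t \<cdot>\<^sub>v (J_mat n *\<^sub>v f) \<and> y \<in> compat n W w"
proof -
  let ?k = "J_mat n *\<^sub>v f" and ?Vpi = "lin_span (2*n) [f]"
  have Wc: "W \<subseteq> carrier_vec (2*n)" using W unfolding submodule_def by simp
  have k: "?k \<in> carrier_vec (2*n)" using f by simp
  let ?C = "commuting_part n W ?Vpi"
  have C: "?C = {g \<in> W. g \<bullet> ?k = 0}" by (rule commuting_part_lin_span_single[OF Wc f])
  obtain u where u: "u \<in> perp n {a + b | a b. a \<in> ?Vpi \<and> b \<in> ?C}" and mu: "m = u + v'"
    using pm m unfolding post_measurement_def compat_def by blast
  obtain u' where u': "u' \<in> perp n ?C" and v': "v' = u' + w"
    using pm unfolding post_measurement_def compat_def by blast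
  have uc: "u \<in> carrier_vec (2*n)" and u'c: "u' \<in> carrier_vec (2*n)"
    using u u' unfolding perp_def by auto
  define d where "d = u + u'"
  have dc: "d \<in> carrier_vec (2*n)" unfolding d_def using uc u'c by simp
  have "g \<bullet> d = 0" if g: "g \<in> W" and gk: "g \<bullet> ?k = 0" for g
  proof -
    have gc: "g \<in> carrier_vec (2*n)" using g Wc by blast
    have "g \<in> ?C" using g gk C by blast
    moreover have "0 \<cdot>\<^sub>v f \<in> ?Vpi" using lin_span_single[OF f] by blast
    moreover have "g = 0 \<cdot>\<^sub>v f + g" using gc f by auto
    ultimately have "g \<bullet> u = 0" and "g \<bullet> u' = 0" using u u' unfolding perp_def by blast+
    then show ?thesis unfolding d_def using gc uc u'c by (simp add: scalar_prod_add_distrib)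
  qed
  then obtain t where t: "\<And>g. g \<in> W \<Longrightarrow> g \<bullet> d = t * (g \<bullet> ?k)"
    using scalar_prod_proportional[OF inv W dc k] by blast
  have "g \<bullet> (d - t \<cdot>\<^sub>v ?k) = 0" if "g \<in> W" for g
    using that t Wc dc k by (auto simp: scalar_prod_minus_distrib[of _ "2*n"])
  then have "d - t \<cdot>\<^sub>v ?k \<in> perp n W" unfolding perp_def using dc k by simp
  moreover have "m = ((d - t \<cdot>\<^sub>v ?k) + w) + t \<cdot>\<^sub>v ?k"
    unfolding mu v' d_def using uc u'c w k by (auto intro!: eq_vecI)
  ultimately show ?thesis unfolding compat_def by blast
qed

lemma shifted_state_post_measurement:
  fixes t :: 'a
  assumes y: "y \<in> compat n W w"
  defines "m \<equiv> y + t \<cdot>\<^sub>v (J_mat n *\<^sub>v f)"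
  shows "possible_outcome n W w (lin_span (2*n) [f]) m"
    and "post_measurement n W w (lin_span (2*n) [f]) m
      {a + b | a b. a \<in> lin_span (2*n) [f] \<and> b \<in> commuting_part n W (lin_span (2*n) [f])} m"
    and "m \<in> compat n V m"
proof -
  let ?k = "J_mat n *\<^sub>v f" and ?Vpi = "lin_span (2*n) [f]"
  have Wc: "W \<subseteq> carrier_vec (2*n)" using W unfolding submodule_def by simp
  have k: "?k \<in> carrier_vec (2*n)" using f by simp
  obtain u where u: "u \<in> perp n W" and yu: "y = u + w" using y unfolding compat_def by blast
  have uc: "u \<in> carrier_vec (2*n)" using u unfolding perp_def by simp
  have mc: "m \<in> carrier_vec (2*n)" unfolding m_def yu using uc w k by simp
  show m_self: "m \<in> compat n V m" for V
    unfolding compat_def perp_def using mc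
    by (intro CollectI exI[of _ "0\<^sub>v (2*n)"]) (auto simp: scalar_prod_def)
  have fk: "f \<bullet> ?k = 0" using poisson_eq_J_mat[OF f, of f] by simp
  have "(- t) \<cdot>\<^sub>v ?k \<in> perp n ?Vpi"
    using perp_lin_span[of "[f]" n] fk k f by simp
  moreover have "y = (- t) \<cdot>\<^sub>v ?k + m" unfolding m_def yu using uc w k by (auto intro!: eq_vecI)
  ultimately have y_Vpi: "y \<in> compat n ?Vpi m" unfolding compat_def by blast
  then show "possible_outcome n W w ?Vpi m"
    unfolding possible_outcome_def using mc y by blast
  have "g \<bullet> (u + t \<cdot>\<^sub>v ?k) = 0" if "g \<in> commuting_part n W ?Vpi" for g
  proof -
    have g: "g \<in> W" and gk: "g \<bullet> ?k = 0"
      using that commuting_part_lin_span_single[OF Wc f] by auto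
    have gc: "g \<in> carrier_vec (2*n)" using g Wc by blast
    have "g \<bullet> u = 0" using u g unfolding perp_def by blast
    then show ?thesis using gc uc k gk by (simp add: scalar_prod_add_distrib)
  qed
  then have "u + t \<cdot>\<^sub>v ?k \<in> perp n (commuting_part n W ?Vpi)"
    unfolding perp_def using uc k by simp
  moreover have "m = (u + t \<cdot>\<^sub>v ?k) + w" unfolding m_def yu using uc w k by (auto intro!: eq_vecI)
  ultimately have "m \<in> compat n (commuting_part n W ?Vpi) w" unfolding compat_def by blast
  then show "post_measurement n W w ?Vpi m
      {a + b | a b. a \<in> ?Vpi \<and> b \<in> commuting_part n W ?Vpi} m"
    unfolding post_measurement_def using m_self by blast
qed

lemma measurement_mixture:
  assumes inv: "\<And>a::'a. a \<noteq> 0 \<Longrightarrow> \<exists>b. a * b = 1"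
  shows "\<Union> {compat n V' v' | vpi V' v'.
      possible_outcome n W w (lin_span (2*n) [f]) vpi \<and>
      post_measurement n W w (lin_span (2*n) [f]) vpi V' v'}
    = {y + t \<cdot>\<^sub>v (J_mat n *\<^sub>v f) | y t. y \<in> compat n W w}"
proof (intro equalityI subsetI)
  fix m assume "m \<in> \<Union> {compat n V' v' | vpi V' v'.
      possible_outcome n W w (lin_span (2*n) [f]) vpi \<and>
      post_measurement n W w (lin_span (2*n) [f]) vpi V' v'}"
  then show "m \<in> {y + t \<cdot>\<^sub>v (J_mat n *\<^sub>v f) | y t. y \<in> compat n W w}"
    using post_measurement_compat_subset_shifts[OF inv] by blast
next
  fix m assume "m \<in> {y + t \<cdot>\<^sub>v (J_mat n *\<^sub>v f) | y t. y \<in> compat n W w}"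
  then obtain y t where "y \<in> compat n W w" and "m = y + t \<cdot>\<^sub>v (J_mat n *\<^sub>v f)" by blast
  then show "m \<in> \<Union> {compat n V' v' | vpi V' v'.
      possible_outcome n W w (lin_span (2*n) [f]) vpi \<and>
      post_measurement n W w (lin_span (2*n) [f]) vpi V' v'}"
    using shifted_state_post_measurement by blast
qed

end

section \<open>Coupling the memory to the information system\<close>

definition coupling :: "nat \<Rightarrow> 'a::comm_ring_1 mat \<Rightarrow> 'a mat \<Rightarrow> 'a mat" where
  "coupling N T S = (T \<oplus>\<^sub>m 1\<^sub>m (2*N)) * (1\<^sub>m 2 \<oplus>\<^sub>m S) * Phi N
     * (1\<^sub>m 2 \<oplus>\<^sub>m minv (2*N) S) * (minv 2 T \<oplus>\<^sub>m 1\<^sub>m (2*N))"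

context
  fixes N :: nat and T S :: "'a::comm_ring_1 mat"
  assumes N: "N \<ge> 1" and T: "symplectic 1 T" and S: "symplectic N S"
begin

lemma coupling_factors:
  shows "T \<in> carrier_mat 2 2" and "minv 2 T \<in> carrier_mat 2 2"
    and "T * minv 2 T = 1\<^sub>m 2" and "minv 2 T * T = 1\<^sub>m 2"
    and "S \<in> carrier_mat (2*N) (2*N)" and "minv (2*N) S \<in> carrier_mat (2*N) (2*N)"
    and "S * minv (2*N) S = 1\<^sub>m (2*N)" and "minv (2*N) S * S = 1\<^sub>m (2*N)"
  using symplectic_carrier[OF T] symplectic_inverse[OF T] symplectic_carrier[OF S]
    symplectic_inverse[OF S] by simp_all

lemma coupling_conj:
  "coupling N T S = (T \<oplus>\<^sub>m S) * Phi N * (minv 2 T \<oplus>\<^sub>m minv (2*N) S)"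
proof -
  note F = coupling_factors
  have L: "(T \<oplus>\<^sub>m 1\<^sub>m (2*N)) * (1\<^sub>m 2 \<oplus>\<^sub>m S) = T \<oplus>\<^sub>m S"
    using dsum_mult[OF F(1) one_carrier_mat one_carrier_mat F(5)] F(1,5) by simp
  have R: "(1\<^sub>m 2 \<oplus>\<^sub>m minv (2*N) S) * (minv 2 T \<oplus>\<^sub>m 1\<^sub>m (2*N)) = minv 2 T \<oplus>\<^sub>m minv (2*N) S"
    using dsum_mult[OF one_carrier_mat F(6) F(2) one_carrier_mat] F(2,6) by simp
  have TS: "(T \<oplus>\<^sub>m S) * Phi N \<in> carrier_mat (2 + 2*N) (2 + 2*N)"
    using mult_carrier_mat[OF dsum_carrier[OF F(1,5)] Phi_carrier] by simp
  show ?thesis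
    unfolding coupling_def L R[symmetric]
    by (rule assoc_mult_mat[OF TS dsum_carrier[OF one_carrier_mat F(6)]
          dsum_carrier[OF F(2) one_carrier_mat]])
qed

lemma coupling_carrier: "coupling N T S \<in> carrier_mat (2 + 2*N) (2 + 2*N)"
  unfolding coupling_conj
  using mult_carrier_mat[OF mult_carrier_mat[OF dsum_carrier[OF coupling_factors(1,5)] Phi_carrier]
      dsum_carrier[OF coupling_factors(2,6)]]
  by simp

lemma coupling_invertible:
  obtains G where "G \<in> carrier_mat (2 + 2*N) (2 + 2*N)"
    and "coupling N T S * G = 1\<^sub>m (2 + 2*N)" and "G * coupling N T S = 1\<^sub>m (2 + 2*N)"
proof -
  note F = coupling_factors
  define P where "P = T \<oplus>\<^sub>m S"
  define Q where "Q = minv 2 T \<oplus>\<^sub>m minv (2*N) S"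
  define \<Phi>i :: "'a mat" where "\<Phi>i = minv (2 * (1 + N)) (Phi N)"
  have P: "P \<in> carrier_mat (2 + 2*N) (2 + 2*N)" unfolding P_def using dsum_carrier[OF F(1,5)] .
  have Q: "Q \<in> carrier_mat (2 + 2*N) (2 + 2*N)" unfolding Q_def using dsum_carrier[OF F(2,6)] .
  have PQ: "P * Q = 1\<^sub>m (2 + 2*N)" and QP: "Q * P = 1\<^sub>m (2 + 2*N)"
    unfolding P_def Q_def using dsum_mult[OF F(1,5,2,6)] dsum_mult[OF F(2,6,1,5)] F(3,4,7,8)
    by (simp_all add: dsum_one)
  have \<Phi>i: "\<Phi>i \<in> carrier_mat (2 + 2*N) (2 + 2*N)"
    and \<Phi>\<Phi>i: "Phi N * \<Phi>i = 1\<^sub>m (2 + 2*N)" and \<Phi>i\<Phi>: "\<Phi>i * Phi N = 1\<^sub>m (2 + 2*N)"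
    using symplectic_inverse[OF Phi_symplectic[OF N]] unfolding \<Phi>i_def by simp_all
  show ?thesis
  proof (rule that[of "P * \<Phi>i * Q"])
    show "P * \<Phi>i * Q \<in> carrier_mat (2 + 2*N) (2 + 2*N)"
      using mult_carrier_mat[OF mult_carrier_mat[OF P \<Phi>i] Q] .
    show "coupling N T S * (P * \<Phi>i * Q) = 1\<^sub>m (2 + 2*N)"
      unfolding coupling_conj P_def[symmetric] Q_def[symmetric]
      by (rule mult_conj_inverse[OF P Q Phi_carrier \<Phi>i PQ QP \<Phi>\<Phi>i])
    show "P * \<Phi>i * Q * coupling N T S = 1\<^sub>m (2 + 2*N)"
      unfolding coupling_conj P_def[symmetric] Q_def[symmetric]
      by (rule mult_conj_inverse[OF P Q \<Phi>i Phi_carrier PQ QP \<Phi>i\<Phi>])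
  qed
qed

lemma coupling_mult_append:
  assumes x: "x \<in> carrier_vec 2" and y: "y \<in> carrier_vec (2*N)"
  shows "coupling N T S *\<^sub>v (x @\<^sub>v y) =
    (x + (minv (2*N) S *\<^sub>v y) $ 0 \<cdot>\<^sub>v (T *\<^sub>v unit_vec 2 0)) @\<^sub>v
    (y + (- (minv 2 T *\<^sub>v x) $ 1) \<cdot>\<^sub>v (S *\<^sub>v unit_vec (2*N) 1))"
proof -
  note F = coupling_factors
  define a where "a = minv 2 T *\<^sub>v x"
  define b where "b = minv (2*N) S *\<^sub>v y"
  have a: "a \<in> carrier_vec 2" and b: "b \<in> carrier_vec (2*N)"
    unfolding a_def b_def using F(2,6) x y by simp_all
  have "coupling N T S *\<^sub>v (x @\<^sub>v y)
      = (T \<oplus>\<^sub>m S) *\<^sub>v (Phi N *\<^sub>v ((minv 2 T \<oplus>\<^sub>m minv (2*N) S) *\<^sub>v (x @\<^sub>v y)))"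
  proof -
    have P: "T \<oplus>\<^sub>m S \<in> carrier_mat (2 + 2*N) (2 + 2*N)" using dsum_carrier[OF F(1,5)] .
    have Q: "minv 2 T \<oplus>\<^sub>m minv (2*N) S \<in> carrier_mat (2 + 2*N) (2 + 2*N)"
      using dsum_carrier[OF F(2,6)] .
    have z: "x @\<^sub>v y \<in> carrier_vec (2 + 2*N)" using append_carrier_vec[OF x y] .
    show ?thesis unfolding coupling_conj
      using assoc_mult_mat_vec[OF mult_carrier_mat[OF P Phi_carrier] Q z]
        assoc_mult_mat_vec[OF P Phi_carrier mult_mat_vec_carrier[OF Q z]] by simp
  qed
  also have "\<dots> = (T \<oplus>\<^sub>m S) *\<^sub>v
      ((a + b $ 0 \<cdot>\<^sub>v unit_vec 2 0) @\<^sub>v (b + (- a $ 1) \<cdot>\<^sub>v unit_vec (2*N) 1))"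
    unfolding dsum_mult_vec[OF F(2,6) x y] a_def[symmetric] b_def[symmetric]
      Phi_mult_append[OF N a b] ..
  also have "\<dots> = (T *\<^sub>v a + b $ 0 \<cdot>\<^sub>v (T *\<^sub>v unit_vec 2 0)) @\<^sub>v
      (S *\<^sub>v b + (- a $ 1) \<cdot>\<^sub>v (S *\<^sub>v unit_vec (2*N) 1))"
    using F(1,5) a b by (simp add: dsum_mult_vec mult_add_distrib_mat_vec mult_mat_vec_smult)
  finally have eq: "coupling N T S *\<^sub>v (x @\<^sub>v y) = (T *\<^sub>v a + b $ 0 \<cdot>\<^sub>v (T *\<^sub>v unit_vec 2 0)) @\<^sub>v
      (S *\<^sub>v b + (- a $ 1) \<cdot>\<^sub>v (S *\<^sub>v unit_vec (2*N) 1))" .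
  have "T *\<^sub>v a = x" and "S *\<^sub>v b = y"
    unfolding a_def b_def using mult_mat_vec_cancel F x y by blast+
  with eq show ?thesis unfolding a_def b_def by simp
qed

context
  fixes v f :: "'a vec"
  assumes v_def: "v = minv 2 (transpose_mat T) *\<^sub>v unit_vec 2 0"
    and f_def: "f = minv (2*N) (transpose_mat S) *\<^sub>v unit_vec (2*N) 0"
begin

lemma observables_carrier: "v \<in> carrier_vec 2" "f \<in> carrier_vec (2*N)"
  unfolding v_def f_def
  using minv_transpose[OF coupling_factors(1-4)] minv_transpose[OF coupling_factors(5-8)]
    coupling_factors(2,6) by simp_all

lemma memory_observable_frame: "z \<in> carrier_vec 2 \<Longrightarrow> v \<bullet> (T *\<^sub>v z) = z $ 0"
  unfolding v_def minv_transpose[OF coupling_factors(1-4)]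
  using transpose_inverse_scalar_prod[OF coupling_factors(1,2,4)] by simp

lemma system_observable_frame: "z \<in> carrier_vec (2*N) \<Longrightarrow> f \<bullet> (S *\<^sub>v z) = z $ 0"
  unfolding f_def minv_transpose[OF coupling_factors(5-8)]
  using transpose_inverse_scalar_prod[OF coupling_factors(5,6,8)] N by simp

lemma J_mat_system_observable: "J_mat N *\<^sub>v f = - (S *\<^sub>v unit_vec (2*N) 1)"
  unfolding f_def symplectic_transformed_position[OF S N]
  using coupling_factors(5) by (simp add: J_mat_J_mat)

lemma coupling_mult_append_observables:
  assumes x: "x \<in> carrier_vec 2" and y: "y \<in> carrier_vec (2*N)"
  shows "coupling N T S *\<^sub>v (x @\<^sub>v y) =
    (x + (f \<bullet> y) \<cdot>\<^sub>v (T *\<^sub>v unit_vec 2 0)) @\<^sub>v (y + (minv 2 T *\<^sub>v x) $ 1 \<cdot>\<^sub>v (J_mat N *\<^sub>v f))"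
proof -
  have "f \<bullet> y = (minv (2*N) S *\<^sub>v y) $ 0"
    using system_observable_frame[of "minv (2*N) S *\<^sub>v y"] mult_mat_vec_cancel[OF coupling_factors(7,5,6) y]
      coupling_factors(6) y by simp
  moreover have "(- c) \<cdot>\<^sub>v (S *\<^sub>v unit_vec (2*N) 1) = c \<cdot>\<^sub>v (J_mat N *\<^sub>v f)" for c
    unfolding J_mat_system_observable using coupling_factors(5) by (auto intro!: eq_vecI)
  ultimately show ?thesis unfolding coupling_mult_append[OF x y] by simp
qed

lemma coupling_records_observable:
  assumes x: "x \<in> carrier_vec 2" and vx: "v \<bullet> x = 0" and y: "y \<in> carrier_vec (2*N)"
  shows "v \<bullet> vec_first (coupling N T S *\<^sub>v (x @\<^sub>v y)) 2
    = f \<bullet> vec_last (coupling N T S *\<^sub>v (x @\<^sub>v y)) (2*N)"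
proof -
  note vf = observables_carrier
  have Te: "T *\<^sub>v unit_vec 2 0 \<in> carrier_vec 2" and Jf: "J_mat N *\<^sub>v f \<in> carrier_vec (2*N)"
    using coupling_factors(1) vf by simp_all
  have "f \<bullet> (J_mat N *\<^sub>v f) = 0" using poisson_eq_J_mat[OF vf(2), of f] by simp
  moreover have "v \<bullet> (T *\<^sub>v unit_vec 2 0) = 1" using memory_observable_frame[of "unit_vec 2 0"] by simp
  ultimately show ?thesis
    unfolding coupling_mult_append_observables[OF x y]
    using x y vx vf Te Jf
    by (simp add: vec_first_append vec_last_append scalar_prod_add_distrib[of _ 2]
        scalar_prod_add_distrib[of _ "2*N"])
qed

lemma coupling_final_state:
  assumes ws: "set ws \<subseteq> carrier_vec (2*N)" and w: "w \<in> carrier_vec (2*N)"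
  shows "compat (1 + N)
      (act_space (1 + N) (coupling N T S)
        (lin_span (2 + 2*N) ((v @\<^sub>v 0\<^sub>v (2*N)) # map (\<lambda>wi. 0\<^sub>v 2 @\<^sub>v wi) ws)))
      (act_vec (coupling N T S) (0\<^sub>v 2 @\<^sub>v w))
    = (\<lambda>z. coupling N T S *\<^sub>v z) `
      {x @\<^sub>v y | x y. x \<in> carrier_vec 2 \<and> v \<bullet> x = 0 \<and> y \<in> compat N (lin_span (2*N) ws) w}"
proof -
  obtain G where "G \<in> carrier_mat (2 + 2*N) (2 + 2*N)"
    and "coupling N T S * G = 1\<^sub>m (2 + 2*N)" and "G * coupling N T S = 1\<^sub>m (2 + 2*N)"
    by (rule coupling_invertible)
  moreover have gens: "set ((v @\<^sub>v 0\<^sub>v (2*N)) # map (\<lambda>wi. 0\<^sub>v 2 @\<^sub>v wi) ws) \<subseteq> carrier_vec (2 + 2*N)"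
    using append_carrier_vec[OF observables_carrier(1) zero_carrier_vec]
      append_carrier_vec[OF zero_carrier_vec[of 2] subsetD[OF ws]] by auto
  moreover have "0\<^sub>v 2 @\<^sub>v w \<in> carrier_vec (2 + 2*N)"
    using append_carrier_vec[OF zero_carrier_vec w] .
  ultimately have "compat (1 + N)
      (act_space (1 + N) (coupling N T S)
        (lin_span (2 + 2*N) ((v @\<^sub>v 0\<^sub>v (2*N)) # map (\<lambda>wi. 0\<^sub>v 2 @\<^sub>v wi) ws)))
      (act_vec (coupling N T S) (0\<^sub>v 2 @\<^sub>v w))
    = (\<lambda>z. coupling N T S *\<^sub>v z) ` compat (1 + N)
        (lin_span (2 + 2*N) ((v @\<^sub>v 0\<^sub>v (2*N)) # map (\<lambda>wi. 0\<^sub>v 2 @\<^sub>v wi) ws)) (0\<^sub>v 2 @\<^sub>v w)"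
    using coupling_carrier lin_span_carrier[OF gens] by (intro compat_act) simp_all
  then show ?thesis unfolding initial_state_compat[OF observables_carrier(1) ws w] .
qed

lemma coupling_marginal:
  assumes Y: "Y \<subseteq> carrier_vec (2*N)"
  shows "(\<lambda>m. vec_last m (2*N)) ` (\<lambda>z. coupling N T S *\<^sub>v z) `
      {x @\<^sub>v y | x y. x \<in> carrier_vec 2 \<and> v \<bullet> x = 0 \<and> y \<in> Y}
    = {y + t \<cdot>\<^sub>v (J_mat N *\<^sub>v f) | y t. y \<in> Y}"
proof (intro equalityI subsetI)
  fix m assume "m \<in> (\<lambda>m. vec_last m (2*N)) ` (\<lambda>z. coupling N T S *\<^sub>v z) `
      {x @\<^sub>v y | x y. x \<in> carrier_vec 2 \<and> v \<bullet> x = 0 \<and> y \<in> Y}"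
  then obtain x y where x: "x \<in> carrier_vec 2" and y: "y \<in> Y"
    and m: "m = vec_last (coupling N T S *\<^sub>v (x @\<^sub>v y)) (2*N)" by blast
  have "m = y + (minv 2 T *\<^sub>v x) $ 1 \<cdot>\<^sub>v (J_mat N *\<^sub>v f)"
    unfolding m using coupling_mult_append_observables[OF x] y Y observables_carrier
    by (auto simp: vec_last_append)
  then show "m \<in> {y + t \<cdot>\<^sub>v (J_mat N *\<^sub>v f) | y t. y \<in> Y}" using y by blast
next
  fix m assume "m \<in> {y + t \<cdot>\<^sub>v (J_mat N *\<^sub>v f) | y t. y \<in> Y}"
  then obtain y t where y: "y \<in> Y" and m: "m = y + t \<cdot>\<^sub>v (J_mat N *\<^sub>v f)" by blast
  define x where "x = T *\<^sub>v (t \<cdot>\<^sub>v unit_vec 2 1)"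
  have e: "t \<cdot>\<^sub>v unit_vec 2 1 \<in> carrier_vec 2" by simp
  have x: "x \<in> carrier_vec 2" unfolding x_def using coupling_factors(1) by simp
  have "v \<bullet> x = 0" unfolding x_def using memory_observable_frame[OF e] by simp
  moreover have "(minv 2 T *\<^sub>v x) $ 1 = t"
    unfolding x_def using mult_mat_vec_cancel[OF coupling_factors(4,2,1) e] by simp
  then have "vec_last (coupling N T S *\<^sub>v (x @\<^sub>v y)) (2*N) = m"
    unfolding m using coupling_mult_append_observables[OF x] y Y observables_carrier
    by (auto simp: vec_last_append)
  ultimately show "m \<in> (\<lambda>m. vec_last m (2*N)) ` (\<lambda>z. coupling N T S *\<^sub>v z) `
      {x @\<^sub>v y | x y. x \<in> carrier_vec 2 \<and> v \<bullet> x = 0 \<and> y \<in> Y}"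
    using x y by blast
qed

end

end

theorem theorem5:
  fixes N :: nat
    and ws :: "'a::comm_ring_1 vec list"
    and w :: "'a vec"
    and S T \<Gamma> :: "'a mat"
    and W V0 Vfin :: "'a vec set"
    and f v v0 vfin :: "'a vec"
  assumes ring: "(\<exists>d. is_Zd TYPE('a) d) \<or> is_R TYPE('a)"
    and N: "N \<ge> 1"
    and ws: "set ws \<subseteq> carrier_vec (2*N)"
    and valid: "valid_state N (lin_span (2*N) ws) w"
    and S: "symplectic N S"
    and T: "symplectic 1 T"
    and W_def: "W = lin_span (2*N) ws"
    and f_def: "f = minv (2*N) (transpose_mat S) *\<^sub>v unit_vec (2*N) 0"
    and v_def: "v = minv 2 (transpose_mat T) *\<^sub>v unit_vec 2 0"
    and V0_def: "V0 = lin_span (2 + 2*N) ((v @\<^sub>v 0\<^sub>v (2*N)) # map (\<lambda>wi. 0\<^sub>v 2 @\<^sub>v wi) ws)"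
    and v0_def: "v0 = 0\<^sub>v 2 @\<^sub>v w"
    and Gamma_def: "\<Gamma> = (T \<oplus>\<^sub>m 1\<^sub>m (2*N)) * (1\<^sub>m 2 \<oplus>\<^sub>m S) * Phi N
              * (1\<^sub>m 2 \<oplus>\<^sub>m minv (2*N) S) * (minv 2 T \<oplus>\<^sub>m 1\<^sub>m (2*N))"
    and Vfin_def: "Vfin = act_space (1 + N) \<Gamma> V0"
    and vfin_def: "vfin = act_vec \<Gamma> v0"
  shows "(\<forall>m \<in> compat (1 + N) Vfin vfin.
            v \<bullet> vec_first m 2 = f \<bullet> vec_last m (2*N))
       \<and> (((\<exists>d. is_Zd TYPE('a) d \<and> prime d) \<or> is_R TYPE('a)) \<longrightarrow>
            (\<lambda>m. vec_last m (2*N)) ` compat (1 + N) Vfin vfin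
            = \<Union> {compat N V' v' | vpi V' v'.
                    possible_outcome N W w (lin_span (2*N) [f]) vpi \<and>
                    post_measurement N W w (lin_span (2*N) [f]) vpi V' v'})"
proof -
  have \<Gamma>: "\<Gamma> = coupling N T S" unfolding Gamma_def coupling_def ..
  have W: "submodule (2*N) W" and w: "w \<in> carrier_vec (2*N)"
    using valid unfolding W_def valid_state_def by auto
  have compat_W: "compat N W w \<subseteq> carrier_vec (2*N)"
    using w unfolding compat_def perp_def by auto
  have final: "compat (1 + N) Vfin vfin = (\<lambda>z. \<Gamma> *\<^sub>v z) `
      {x @\<^sub>v y | x y. x \<in> carrier_vec 2 \<and> v \<bullet> x = 0 \<and> y \<in> compat N W w}"
    unfolding Vfin_def vfin_def V0_def v0_def \<Gamma> W_def
    by (rule coupling_final_state[OF N T S v_def f_def ws w])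
  show ?thesis
  proof (intro conjI impI)
    show "\<forall>m \<in> compat (1 + N) Vfin vfin. v \<bullet> vec_first m 2 = f \<bullet> vec_last m (2*N)"
      unfolding final \<Gamma> using coupling_records_observable[OF N T S v_def f_def] compat_W by auto
  next
    assume "(\<exists>d. is_Zd TYPE('a) d \<and> prime d) \<or> is_R TYPE('a)"
    then have inv: "\<And>a::'a. a \<noteq> 0 \<Longrightarrow> \<exists>b. a * b = 1"
      using is_Zd_prime_inverse is_R_inverse by blast
    show "(\<lambda>m. vec_last m (2*N)) ` compat (1 + N) Vfin vfin
        = \<Union> {compat N V' v' | vpi V' v'.
            possible_outcome N W w (lin_span (2*N) [f]) vpi \<and>
            post_measurement N W w (lin_span (2*N) [f]) vpi V' v'}"
      unfolding final \<Gamma> coupling_marginal[OF N T S v_def f_def compat_W]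
      by (rule measurement_mixture[OF W w observables_carrier(2)[OF N T S v_def f_def] inv,
            symmetric])
  qed
qed

end
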